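(* Let $X$ be a nonempty set, $f:X\to X$ a one-to-one function, $x_0\in X$, $k\in\mathbb{N}$, and $\tau_3$ the fuzzy topology on $X$ defined below. Then $f:(X,\tau_3)\to(X,\tau_3)$ is open if and only if $f$ is onto.
   Context: A fuzzy subset of $X$ is a function $\mu:X\to[0,1]$; union is the pointwise supremum, intersection the pointwise minimum; $\emptyset$ is the constant $0$ and $X$ the constant $1$. A fuzzy topology is a family of fuzzy subsets containing $\emptyset$ and $X$, closed under arbitrary unions and finite intersections; the topology generated by a base $\mathbb{B}$ consists of $\emptyset$ and all unions of subfamilies of $\mathbb{B}$. $\mathbb{N}=\{1,2,\dots\}$. Powers: $f^0=\mathrm{id}_X$, $f^{n+1}=f^n\circ f$ for $n\ge0$; for $n<0$, $f^n(x_0)$ denotes (when it exists) the unique $y$ with $f^{-n}(y)=x_0$ (unique since $f$ is injective). Definition of $\tau_3$: $A(x_0)$ is the set of all points $f^n(x_0)$, $n\in\mathbb{Z}$, that are defined; $N_0=\{n\in\mathbb{Z}: f^n(x_0)\text{ is defined and lies in }A(x_0)\}$. Let $C$ be the fuzzy set with $\mu_C(x)=1$ for $x\in X\setminus A(x_0)$ and $\mu_C(x)=0$ for $x\in A(x_0)$. For $n\in N_0$ let $\mu_{C_n}(x)=1$ if $x=f^n(x_0)$, $\mu_{C_n}(x)=1/k$ if $x\in A(x_0)$ and $x\neq f^n(x_0)$, and $\mu_{C_n}(x)=0$ otherwise. $\tau_3$ is generated by the base $\{C\}\cup\{C_n:n\in N_0\}$. The image of a fuzzy set $A$ is $\mu_{f(A)}(y)=\sup\{\mu_A(x):f(x)=y\}$,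 and $0$ if $y\notin f(X)$; $f$ is open if $f(U)$ is open for every open fuzzy set $U$. *)

theory Defs
  imports Complex_Main
begin

text \<open>Fuzzy subsets of the type 'a are functions 'a => real (values in [0,1]).\<close>

type_synonym 'a fuzzy = "'a \<Rightarrow> real"

definition fuzzy_empty :: "'a fuzzy" where
  "fuzzy_empty = (\<lambda>_. 0)"

definition fuzzy_Union :: "'a fuzzy set \<Rightarrow> 'a fuzzy" where
  "fuzzy_Union F = (\<lambda>x. Sup ((\<lambda>\<mu>. \<mu> x) ` F))"

text \<open>Topology generated by a base: the empty fuzzy set together with all unions of
  subfamilies of the base (the union of the empty subfamily is the empty fuzzy set).\<close>
definition generated_fuzzy_topology :: "'a fuzzy set \<Rightarrow> 'a fuzzy set" where
  "generated_fuzzy_topology B =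
     insert fuzzy_empty {fuzzy_Union F | F. F \<subseteq> B \<and> F \<noteq> {}}"

definition fuzzy_image :: "('a \<Rightarrow> 'b) \<Rightarrow> 'a fuzzy \<Rightarrow> 'b fuzzy" where
  "fuzzy_image f A = (\<lambda>y. if y \<in> range f then Sup ((\<lambda>x. A x) ` {x. f x = y}) else 0)"

definition fuzzy_open_map :: "'a fuzzy set \<Rightarrow> 'b fuzzy set \<Rightarrow> ('a \<Rightarrow> 'b) \<Rightarrow> bool" where
  "fuzzy_open_map T S f \<longleftrightarrow> (\<forall>U \<in> T. fuzzy_image f U \<in> S)"

text \<open>Integer powers: zpow_is f n x y means "f^n(x) is defined and equals y";
  for n < 0 this is the (unique, for injective f) y with f^(-n)(y) = x.\<close>
definition zpow_is :: "('a \<Rightarrow> 'a) \<Rightarrow> int \<Rightarrow> 'a \<Rightarrow> 'a \<Rightarrow> bool" where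
  "zpow_is f n x y \<longleftrightarrow>
     (if n \<ge> 0 then y = (f ^^ nat n) x else (f ^^ nat (- n)) y = x)"

definition orbitA :: "('a \<Rightarrow> 'a) \<Rightarrow> 'a \<Rightarrow> 'a set" where
  "orbitA f x0 = {y. \<exists>n. zpow_is f n x0 y}"

definition N0 :: "('a \<Rightarrow> 'a) \<Rightarrow> 'a \<Rightarrow> int set" where
  "N0 f x0 = {n. \<exists>y. zpow_is f n x0 y \<and> y \<in> orbitA f x0}"

definition tau3_C :: "('a \<Rightarrow> 'a) \<Rightarrow> 'a \<Rightarrow> 'a fuzzy" where
  "tau3_C f x0 = (\<lambda>x. if x \<in> orbitA f x0 then 0 else 1)"

definition tau3_Cn :: "('a \<Rightarrow> 'a) \<Rightarrow> 'a \<Rightarrow> nat \<Rightarrow> int \<Rightarrow> 'a fuzzy" where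
  "tau3_Cn f x0 k n = (\<lambda>x. if zpow_is f n x0 x then 1
                          else if x \<in> orbitA f x0 then 1 / real k else 0)"

definition tau3 :: "('a \<Rightarrow> 'a) \<Rightarrow> 'a \<Rightarrow> nat \<Rightarrow> 'a fuzzy set" where
  "tau3 f x0 k = generated_fuzzy_topology
     (insert (tau3_C f x0) (tau3_Cn f x0 k ` N0 f x0))"

end

theory Submission
  imports Defs
begin

text \<open>An injective f moves every point one step along the orbit of x0, and the image of a
  fuzzy set U takes the value U x at f x and 0 off range f. If f is onto, it therefore maps
  C to C and C_n to C_(n+1), so the base, and with it every open set, is carried into \<tau>3.
  If some y is not a value of f, the image of the everywhere positive open set C \<union> C_0
  vanishes at y but not at f y; yet y and f y lie on the same side of the orbit, and an
  open set of \<tau>3 that vanishes at one point vanishes on the whole side containing it.\<close>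

lemma zpow_is_add_one_iff:
  assumes "inj f"
  shows "zpow_is f (n + 1) x0 (f x) \<longleftrightarrow> zpow_is f n x0 x"
proof (cases "n \<ge> 0")
  case True
  then have "nat (n + 1) = Suc (nat n)" by simp
  with True assms show ?thesis by (simp add: zpow_is_def inj_eq)
next
  case negative: False
  show ?thesis
  proof (cases "n = -1")
    case True
    then show ?thesis by (simp add: zpow_is_def)
  next
    case False
    with negative have "nat (- n) = Suc (nat (- (n + 1)))" by auto
    with negative False show ?thesis
      by (simp add: zpow_is_def funpow_Suc_right del: funpow.simps)
  qed
qed

lemma orbitA_image_iff:
  assumes "inj f"
  shows "f x \<in> orbitA f x0 \<longleftrightarrow> x \<in> orbitA f x0"
proof
  assume "f x \<in> orbitA f x0"
  then obtain n where "zpow_is f ((n - 1) + 1) x0 (f x)" by (auto simp: orbitA_def)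
  then show "x \<in> orbitA f x0"
    unfolding zpow_is_add_one_iff[OF assms] by (auto simp: orbitA_def)
next
  assume "x \<in> orbitA f x0"
  then obtain n where "zpow_is f n x0 x" by (auto simp: orbitA_def)
  then have "zpow_is f (n + 1) x0 (f x)" using zpow_is_add_one_iff[OF assms] by blast
  then show "f x \<in> orbitA f x0" by (auto simp: orbitA_def)
qed

lemma N0_add_one:
  assumes "inj f" and "n \<in> N0 f x0"
  shows "n + 1 \<in> N0 f x0"
proof -
  from assms(2) obtain y where "zpow_is f n x0 y" by (auto simp: N0_def)
  then have "zpow_is f (n + 1) x0 (f y)" using zpow_is_add_one_iff[OF assms(1)] by blast
  then show ?thesis by (auto simp: N0_def orbitA_def)
qed

lemma zero_in_N0: "0 \<in> N0 f x0"
  by (auto simp: N0_def orbitA_def zpow_is_def intro!: exI[of _ x0] exI[of _ 0])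

lemma fuzzy_image_inj_apply:
  assumes "inj f"
  shows "fuzzy_image f U (f x) = U x"
proof -
  have "{x'. f x' = f x} = {x}" using assms by (auto simp: inj_eq)
  then show ?thesis by (simp add: fuzzy_image_def)
qed

lemma fuzzy_image_outside_range:
  "y \<notin> range f \<Longrightarrow> fuzzy_image f U y = 0"
  by (simp add: fuzzy_image_def)

lemma fuzzy_image_empty: "fuzzy_image f fuzzy_empty = fuzzy_empty"
proof
  fix y
  show "fuzzy_image f fuzzy_empty y = fuzzy_empty y"
  proof (cases "y \<in> range f")
    case True
    then have "(\<lambda>x. fuzzy_empty x) ` {x. f x = y} = {0}"
      by (auto simp: fuzzy_empty_def)
    with True show ?thesis by (simp add: fuzzy_image_def fuzzy_empty_def)
  qed (simp add: fuzzy_image_def fuzzy_empty_def)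
qed

lemma fuzzy_image_Union:
  assumes "inj f" and "F \<noteq> {}"
  shows "fuzzy_image f (fuzzy_Union F) = fuzzy_Union (fuzzy_image f ` F)"
proof
  fix y
  show "fuzzy_image f (fuzzy_Union F) y = fuzzy_Union (fuzzy_image f ` F) y"
  proof (cases "y \<in> range f")
    case True
    then obtain x where "y = f x" by auto
    moreover have "(\<lambda>\<mu>. \<mu> (f x)) ` fuzzy_image f ` F = (\<lambda>\<mu>. \<mu> x) ` F"
      by (auto simp: fuzzy_image_inj_apply[OF assms(1)] image_iff)
    ultimately show ?thesis
      by (simp add: fuzzy_image_inj_apply[OF assms(1)] fuzzy_Union_def)
  next
    case False
    then have "(\<lambda>\<mu>. \<mu> y) ` fuzzy_image f ` F = {0}"
      using assms(2) by (simp add: image_image fuzzy_image_outside_range image_constant_conv)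
    with False show ?thesis by (simp add: fuzzy_Union_def fuzzy_image_outside_range)
  qed
qed

lemma fuzzy_image_bij_eqI:
  assumes "bij f" and "\<And>x. V (f x) = U x"
  shows "fuzzy_image f U = V"
proof
  fix y
  from assms(1) obtain x where "y = f x" by (metis bij_is_surj surjD)
  then show "fuzzy_image f U y = V y"
    using assms by (simp add: fuzzy_image_inj_apply bij_is_inj)
qed

lemma fuzzy_open_map_generated:
  assumes "inj f" and "fuzzy_image f ` B \<subseteq> B"
  shows "fuzzy_open_map (generated_fuzzy_topology B) (generated_fuzzy_topology B) f"
  unfolding fuzzy_open_map_def generated_fuzzy_topology_def
proof
  fix U assume "U \<in> insert fuzzy_empty {fuzzy_Union F |F. F \<subseteq> B \<and> F \<noteq> {}}"
  then consider "U = fuzzy_empty" | F where "F \<subseteq> B" "F \<noteq> {}" "U = fuzzy_Union F"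
    by auto
  then show "fuzzy_image f U \<in> insert fuzzy_empty {fuzzy_Union F |F. F \<subseteq> B \<and> F \<noteq> {}}"
  proof cases
    case 1
    then show ?thesis by (simp add: fuzzy_image_empty)
  next
    case (2 F)
    then have "fuzzy_image f U = fuzzy_Union (fuzzy_image f ` F)"
      "fuzzy_image f ` F \<subseteq> B" "fuzzy_image f ` F \<noteq> {}"
      using assms by (auto simp: fuzzy_image_Union)
    then show ?thesis by blast
  qed
qed

abbreviation tau3_base :: "('a \<Rightarrow> 'a) \<Rightarrow> 'a \<Rightarrow> nat \<Rightarrow> 'a fuzzy set" where
  "tau3_base f x0 k \<equiv> insert (tau3_C f x0) (tau3_Cn f x0 k ` N0 f x0)"

lemma fuzzy_image_tau3_C:
  assumes "bij f"
  shows "fuzzy_image f (tau3_C f x0) = tau3_C f x0"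
  using assms by (intro fuzzy_image_bij_eqI) (simp_all add: tau3_C_def orbitA_image_iff bij_is_inj)

lemma fuzzy_image_tau3_Cn:
  assumes "bij f"
  shows "fuzzy_image f (tau3_Cn f x0 k n) = tau3_Cn f x0 k (n + 1)"
  using assms by (intro fuzzy_image_bij_eqI)
    (simp_all add: tau3_Cn_def orbitA_image_iff zpow_is_add_one_iff bij_is_inj)

lemma fuzzy_image_tau3_base:
  assumes "bij f"
  shows "fuzzy_image f ` tau3_base f x0 k \<subseteq> tau3_base f x0 k"
  using assms N0_add_one[OF bij_is_inj[OF assms]]
  by (auto simp: fuzzy_image_tau3_C fuzzy_image_tau3_Cn)

lemma tau3_base_le_one:
  assumes "\<mu> \<in> tau3_base f x0 k" and "k \<ge> 1"
  shows "\<mu> x \<le> 1"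
proof -
  have "1 / real k \<le> 1" using assms(2) by simp
  with assms(1) show ?thesis by (auto simp: tau3_C_def tau3_Cn_def)
qed

lemma fuzzy_Union_tau3_base_upper:
  assumes "F \<subseteq> tau3_base f x0 k" and "k \<ge> 1" and "\<mu> \<in> F"
  shows "\<mu> x \<le> fuzzy_Union F x"
  unfolding fuzzy_Union_def
proof (rule cSup_upper)
  show "bdd_above ((\<lambda>\<mu>. \<mu> x) ` F)"
    by (rule bdd_aboveI2[where M = 1]) (meson assms(1,2) subsetD tau3_base_le_one)
qed (use assms(3) in blast)

text \<open>A union of base elements vanishes at a point of the orbit only if it is C itself, and
  at a point off the orbit only if it consists of some C_n, which all vanish off the orbit.\<close>

lemma tau3_open_vanishing:
  assumes "W \<in> tau3 f x0 k" and "k \<ge> 1" and "W y = 0"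
    and "y \<in> orbitA f x0 \<longleftrightarrow> z \<in> orbitA f x0"
  shows "W z = 0"
proof -
  consider "W = fuzzy_empty" | F where "F \<subseteq> tau3_base f x0 k" "F \<noteq> {}" "W = fuzzy_Union F"
    using assms(1) unfolding tau3_def generated_fuzzy_topology_def by blast
  then show ?thesis
  proof cases
    case 1
    then show ?thesis by (simp add: fuzzy_empty_def)
  next
    case (2 F)
    have upper: "\<mu> x \<le> W x" if "\<mu> \<in> F" for \<mu> x
      using fuzzy_Union_tau3_base_upper[OF 2(1) assms(2) that] 2(3) by simp
    show ?thesis
    proof (cases "y \<in> orbitA f x0")
      case True
      have "\<mu> = tau3_C f x0" if "\<mu> \<in> F" for \<mu>
      proof (rule ccontr)
        assume "\<mu> \<noteq> tau3_C f x0"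
        then have "\<mu> y > 0" using \<open>\<mu> \<in> F\<close> 2(1) True assms(2) by (auto simp: tau3_Cn_def)
        with upper[OF \<open>\<mu> \<in> F\<close>, of y] assms(3) show False by simp
      qed
      with 2(2) have "F = {tau3_C f x0}" by auto
      with 2(3) True assms(4) show ?thesis by (simp add: fuzzy_Union_def tau3_C_def)
    next
      case False
      have "tau3_C f x0 \<notin> F"
        using upper[of "tau3_C f x0" y] assms(3) False by (auto simp: tau3_C_def)
      then have "\<mu> z = 0" if "\<mu> \<in> F" for \<mu>
        using that 2(1) False assms(4) by (auto simp: tau3_Cn_def orbitA_def)
      moreover obtain \<mu>\<^sub>0 where "\<mu>\<^sub>0 \<in> F" using 2(2) by blast
      ultimately have "(\<lambda>\<mu>. \<mu> z) ` F = {0}"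
        by (metis (no_types, lifting) image_cong image_constant)
      with 2(3) show ?thesis by (simp add: fuzzy_Union_def)
    qed
  qed
qed

lemma tau3_positive_open:
  assumes "k \<ge> 1"
  obtains U where "U \<in> tau3 f x0 k" and "\<And>x. U x > 0"
proof
  let ?F = "{tau3_C f x0, tau3_Cn f x0 k 0}"
  have F: "?F \<subseteq> tau3_base f x0 k" using zero_in_N0[of f x0] by blast
  then show "fuzzy_Union ?F \<in> tau3 f x0 k"
    unfolding tau3_def generated_fuzzy_topology_def by blast
  fix x
  have "tau3_C f x0 x \<le> fuzzy_Union ?F x" "tau3_Cn f x0 k 0 x \<le> fuzzy_Union ?F x"
    by (rule fuzzy_Union_tau3_base_upper[OF F assms]; simp)+
  moreover have "tau3_C f x0 x > 0 \<or> tau3_Cn f x0 k 0 x > 0"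
    using assms by (auto simp: tau3_C_def tau3_Cn_def)
  ultimately show "fuzzy_Union ?F x > 0" by linarith
qed

theorem theorem2p13:
  fixes f :: "'a \<Rightarrow> 'a" and x0 :: 'a and k :: nat
  assumes "inj f" and "k \<ge> 1"
  shows "fuzzy_open_map (tau3 f x0 k) (tau3 f x0 k) f \<longleftrightarrow> surj f"
proof
  assume open_map: "fuzzy_open_map (tau3 f x0 k) (tau3 f x0 k) f"
  show "surj f"
  proof (rule ccontr)
    assume "\<not> surj f"
    then obtain y where "y \<notin> range f" by blast
    obtain U where U: "U \<in> tau3 f x0 k" "\<And>x. U x > 0"
      using tau3_positive_open[of k f x0] assms(2) by blast
    have "fuzzy_image f U \<in> tau3 f x0 k"
      using open_map U(1) unfolding fuzzy_open_map_def by blast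
    moreover have "fuzzy_image f U y = 0"
      using \<open>y \<notin> range f\<close> by (rule fuzzy_image_outside_range)
    ultimately have "fuzzy_image f U (f y) = 0"
      by (rule tau3_open_vanishing[OF _ assms(2)]) (simp add: orbitA_image_iff[OF assms(1)])
    with U(2)[of y] show False by (simp add: fuzzy_image_inj_apply[OF assms(1)])
  qed
next
  assume "surj f"
  with assms(1) have "bij f" by (simp add: bij_def)
  show "fuzzy_open_map (tau3 f x0 k) (tau3 f x0 k) f"
    unfolding tau3_def
    by (rule fuzzy_open_map_generated[OF assms(1) fuzzy_image_tau3_base[OF \<open>bij f\<close>]])
qed

end
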